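(* Let $(X,\|\cdot\|_X)$ be a normed linear space and $(Y,d_Y)$ a metric space. If there exists a map $f\colon X\to Y$ such that $\lim_{t\to\infty}\rho_f(t)=\infty$, then $\mathrm{dens}(X)\leq\mathrm{dens}(Y)$.
   Context: $\rho_f(t)=\inf\{d_Y(f(x_1),f(x_2)): \|x_1-x_2\|_X\geq t\}$ is the modulus of compression of $f$. $\mathrm{dens}(Z)$ denotes the density character of a metric space $Z$, the smallest cardinality of a dense subset. *)

theory Defs
  imports "HOL-Analysis.Analysis"
begin

text \<open>Modulus of compression of f, valued in extended reals (Inf of the empty set is \<infinity>).\<close>
definition compression_modulus :: "('a::real_normed_vector \<Rightarrow> 'b::metric_space) \<Rightarrow> real \<Rightarrow> ereal" where
  "compression_modulus f t =
     Inf {ereal (dist (f x1) (f x2)) | x1 x2. norm (x1 - x2) \<ge> t}"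

definition dense_subset :: "'a::topological_space set \<Rightarrow> bool" where
  "dense_subset D \<longleftrightarrow> closure D = UNIV"

text \<open>dens(X) \<le> dens(Y), where dens is the least cardinality of a dense subset:
  the minimum over dense subsets of X is at most the minimum over dense subsets of Y,
  i.e. every dense subset of Y is at least as large as some dense subset of X.\<close>
definition dens_le :: "'a::topological_space itself \<Rightarrow> 'b::topological_space itself \<Rightarrow> bool" where
  "dens_le _ _ \<longleftrightarrow>
     (\<forall>D::'b set. dense_subset D \<longrightarrow> (\<exists>E::'a set. dense_subset E \<and> ordLeq2 (card_of E) (card_of D)))"

end

theory Submission
  imports Defs
begin

text \<open>If \<open>\<rho>\<^sub>f(t) \<rightarrow> \<infinity>\<close>, then points of \<open>X\<close> that are far apart have images that are far apart.
  Pulling back a dense set \<open>D \<subseteq> Y\<close> along \<open>f\<close> therefore gives a set of at most \<open>|D|\<close>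
  points that is an \<open>R\<close>-net of \<open>X\<close> for some fixed \<open>R\<close>; its images under the homotheties
  \<open>x \<mapsto> x / (n + 1)\<close> form nets of mesh \<open>R / (n + 1)\<close>, so their union is dense in \<open>X\<close> and,
  \<open>D\<close> being infinite, still has cardinality at most \<open>|D|\<close>.\<close>

unbundle cardinal_syntax

definition coarsely_expanding :: "('a::real_normed_vector \<Rightarrow> 'b::metric_space) \<Rightarrow> bool" where
  "coarsely_expanding f \<longleftrightarrow> (\<forall>M. \<exists>R>0. \<forall>x y. R \<le> norm (x - y) \<longrightarrow> M < dist (f x) (f y))"

lemma compression_modulus_tendsto_imp_coarsely_expanding:
  fixes f :: "'a::real_normed_vector \<Rightarrow> 'b::metric_space"
  assumes "(compression_modulus f \<longlongrightarrow> \<infinity>) at_top"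
  shows "coarsely_expanding f"
  unfolding coarsely_expanding_def
proof
  fix M :: real
  have "eventually (\<lambda>t. ereal M < compression_modulus f t) at_top"
    using assms tendsto_PInfty by blast
  then obtain N where N: "\<And>t. t \<ge> N \<Longrightarrow> ereal M < compression_modulus f t"
    by (auto simp: eventually_at_top_linorder)
  define R where "R = max N 1"
  have "M < dist (f x) (f y)" if "R \<le> norm (x - y)" for x y
  proof -
    have "compression_modulus f R \<le> ereal (dist (f x) (f y))"
      unfolding compression_modulus_def using that by (intro Inf_lower) blast
    moreover have "ereal M < compression_modulus f R"
      by (rule N) (simp add: R_def)
    ultimately have "ereal M < ereal (dist (f x) (f y))"
      by (metis less_le_trans)
    then show ?thesis
      by simp
  qed
  then show "\<exists>R>0. \<forall>x y. R \<le> norm (x - y) \<longrightarrow> M < dist (f x) (f y)"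
    by (intro exI[of _ R]) (auto simp: R_def)
qed

lemma coarsely_expanding_unbounded_range:
  fixes f :: "'a::real_normed_vector \<Rightarrow> 'b::metric_space" and a :: 'a
  assumes "coarsely_expanding f" and "a \<noteq> 0"
  shows "\<not> bounded (range f)"
proof
  assume "bounded (range f)"
  then obtain M where M: "\<And>x. dist (f 0) (f x) \<le> M"
    by (auto simp: bounded_any_center[of _ "f 0"])
  obtain R where R: "R > 0" "\<And>x y. R \<le> norm (x - y) \<Longrightarrow> M < dist (f x) (f y)"
    using assms(1) unfolding coarsely_expanding_def by blast
  have "norm (0 - (R / norm a) *\<^sub>R a) = R"
    using assms(2) R(1) by simp
  with R(2)[of 0 "(R / norm a) *\<^sub>R a"] M[of "(R / norm a) *\<^sub>R a"] show False
    by simp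
qed

lemma finite_dense_subset_imp_finite:
  fixes D :: "'a::t1_space set"
  assumes "dense_subset D" and "finite D"
  shows "finite (UNIV :: 'a set)"
  using assms by (simp add: dense_subset_def finite_imp_closed)

lemma coarsely_expanding_dense_subset_infinite:
  fixes f :: "'a::real_normed_vector \<Rightarrow> 'b::metric_space" and a :: 'a and D :: "'b set"
  assumes "coarsely_expanding f" and "a \<noteq> 0" and "dense_subset D"
  shows "infinite D"
proof
  assume "finite D"
  then have "finite (UNIV :: 'b set)"
    by (rule finite_dense_subset_imp_finite[OF assms(3)])
  then have "finite (range f)"
    by (rule finite_subset[OF subset_UNIV])
  then show False
    using coarsely_expanding_unbounded_range[OF assms(1,2)] by auto
qed

lemma card_of_nat_Times_ordLeq_infinite:
  assumes "infinite D" and "|C| \<le>o |D|"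
  shows "|(UNIV :: nat set) \<times> C| \<le>o |D|"
proof -
  have "|UNIV :: nat set| \<le>o |D|"
    using assms(1) by (simp add: infinite_iff_card_of_nat)
  then show ?thesis
    using card_of_Times_mono2[OF assms(2)] card_of_Times_infinite[OF assms(1) UNIV_not_empty]
      ordLeq_ordIso_trans by blast
qed

lemma coarsely_expanding_pullback_net:
  fixes f :: "'a::real_normed_vector \<Rightarrow> 'b::metric_space" and D :: "'b set"
  assumes "coarsely_expanding f" and "dense_subset D"
  obtains R and C :: "'a set" where "|C| \<le>o |D|" and "\<And>x. \<exists>c\<in>C. norm (x - c) < R"
proof -
  obtain R where R: "\<And>x y. R \<le> norm (x - y) \<Longrightarrow> 1 < dist (f x) (f y)"
    using assms(1) unfolding coarsely_expanding_def by blast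
  define g where "g d = (SOME x. dist (f x) d < 1/2)" for d
  have "\<exists>d\<in>D. norm (x - g d) < R" for x
  proof -
    have "f x \<in> closure D"
      using assms(2) by (simp add: dense_subset_def)
    then obtain d where d: "d \<in> D" "dist (f x) d < 1/2"
      unfolding closure_approachable by (metis dist_commute half_gt_zero zero_less_one)
    then have "dist (f (g d)) d < 1/2"
      unfolding g_def by (intro someI[of "\<lambda>y. dist (f y) d < 1/2" x]) simp
    with d(2) have "dist (f x) (f (g d)) < 1"
      using dist_triangle_half_l[of "f x" d 1 "f (g d)"] by (simp add: dist_commute)
    with R[of x "g d"] d(1) show ?thesis
      by (meson not_le not_less_iff_gr_or_eq)
  qed
  then show thesis
    by (intro that[of "g ` D"]) (auto simp: card_of_image)
qed

lemma dense_subset_rescaled_net: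
  fixes C :: "'a::real_normed_vector set"
  assumes net: "\<And>x. \<exists>c\<in>C. norm (x - c) < R"
  shows "dense_subset ((\<lambda>(n::nat, c). c /\<^sub>R real (Suc n)) ` (UNIV \<times> C))"
  unfolding dense_subset_def
proof (intro set_eqI iffI)
  fix z :: 'a
  show "z \<in> closure ((\<lambda>(n::nat, c). c /\<^sub>R real (Suc n)) ` (UNIV \<times> C))"
    unfolding closure_approachable
  proof (intro allI impI)
    fix e :: real
    assume e: "e > 0"
    obtain n :: nat where n: "R / e < real n"
      using reals_Archimedean2 by blast
    \<comment> \<open>approximate \<open>(n + 1) z\<close> within \<open>R\<close> in the net, then scale back down\<close>
    obtain c where c: "c \<in> C" "norm (real (Suc n) *\<^sub>R z - c) < R"
      using net by blast
    have "dist (c /\<^sub>R real (Suc n)) z = norm (real (Suc n) *\<^sub>R z - c) / real (Suc n)"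
    proof -
      have "c /\<^sub>R real (Suc n) - z = (c - real (Suc n) *\<^sub>R z) /\<^sub>R real (Suc n)"
        by (simp add: scaleR_diff_right)
      then show ?thesis
        by (simp add: dist_norm norm_minus_commute divide_inverse mult.commute)
    qed
    also have "\<dots> < R / real (Suc n)"
      using c(2) by (simp add: divide_strict_right_mono)
    also have "\<dots> \<le> e"
      using n e by (simp add: field_simps)
    finally show "\<exists>y\<in>(\<lambda>(n, c). c /\<^sub>R real (Suc n)) ` (UNIV \<times> C). dist y z < e"
      using c(1) by force
  qed
qed simp

theorem lemma2p1:
  fixes f :: "'a::real_normed_vector \<Rightarrow> 'b::metric_space"
  assumes "(compression_modulus f \<longlongrightarrow> \<infinity>) at_top"
  shows "dens_le TYPE('a) TYPE('b)"
  unfolding dens_le_def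
proof (intro allI impI)
  fix D :: "'b set"
  assume D: "dense_subset D"
  have expanding: "coarsely_expanding f"
    using assms by (rule compression_modulus_tendsto_imp_coarsely_expanding)
  show "\<exists>E::'a set. dense_subset E \<and> |E| \<le>o |D|"
  proof (cases "\<exists>a::'a. a \<noteq> 0")
    case False
    then have "(UNIV :: 'a set) = {0}"
      by auto
    then have "dense_subset {0::'a}"
      by (metis closure_UNIV dense_subset_def)
    moreover have "|{0::'a}| \<le>o |D|"
      using D by (intro card_of_singl_ordLeq) (auto simp: dense_subset_def)
    ultimately show ?thesis
      by blast
  next
    case True
    then obtain a :: 'a where "a \<noteq> 0"
      by blast
    obtain R and C :: "'a set" where C: "|C| \<le>o |D|" and net: "\<And>x. \<exists>c\<in>C. norm (x - c) < R"
      using coarsely_expanding_pullback_net[OF expanding D] by blast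
    have "|(UNIV :: nat set) \<times> C| \<le>o |D|"
      using coarsely_expanding_dense_subset_infinite[OF expanding \<open>a \<noteq> 0\<close> D] C
      by (rule card_of_nat_Times_ordLeq_infinite)
    then have "|(\<lambda>(n::nat, c). c /\<^sub>R real (Suc n)) ` (UNIV \<times> C)| \<le>o |D|"
      by (rule ordLeq_transitive[OF card_of_image])
    with dense_subset_rescaled_net[OF net] show ?thesis
      by blast
  qed
qed

end
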